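(* For a smooth function $f:\mathbb R^2\to\mathbb R$ let $v(f)=(-\partial_{x_2}f,\partial_{x_1}f)$. Let $\mathcal F=\{v(x_1),v(x_2),v(x_1^2x_2^2)\}=\{(0,1),(-1,0),(-2x_1^2x_2,2x_1x_2^2)\}$. Then $\operatorname{Lie}\mathcal F=\{v(f): f\in\mathbb R[x_1,x_2]\}$.
   Context: For smooth vector fields $f_1,f_2$ on $\mathbb R^2$ the Lie bracket is $[f_1,f_2]=(\nabla_x f_2)f_1-(\nabla_x f_1)f_2$. $\operatorname{Lie}\mathcal F$ denotes the smallest linear space of smooth vector fields that contains $\mathcal F$ and is closed under the Lie bracket. $\mathbb R[x_1,x_2]$ is the ring of real polynomials in $x_1,x_2$. *)

theory Defs
  imports "HOL-Analysis.Analysis"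
begin

type_synonym vf = "real \<times> real \<Rightarrow> real \<times> real"

definition poly2 :: "(real \<times> real \<Rightarrow> real) \<Rightarrow> bool" where
  "poly2 f \<longleftrightarrow> (\<exists>(c :: nat \<Rightarrow> nat \<Rightarrow> real) N.
      f = (\<lambda>(x1, x2). \<Sum>i\<le>N. \<Sum>j\<le>N. c i j * x1 ^ i * x2 ^ j))"

definition ham :: "(real \<times> real \<Rightarrow> real) \<Rightarrow> vf" where
  "ham f = (\<lambda>x. (- frechet_derivative f (at x) (0, 1), frechet_derivative f (at x) (1, 0)))"

definition lie_bracket :: "vf \<Rightarrow> vf \<Rightarrow> vf" where
  "lie_bracket f1 f2 = (\<lambda>x. frechet_derivative f2 (at x) (f1 x) - frechet_derivative f1 (at x) (f2 x))"

inductive_set lie_gen :: "vf set \<Rightarrow> vf set" for F where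
  base: "f \<in> F \<Longrightarrow> f \<in> lie_gen F"
| zero: "(\<lambda>x. 0) \<in> lie_gen F"
| add: "f \<in> lie_gen F \<Longrightarrow> g \<in> lie_gen F \<Longrightarrow> (\<lambda>x. f x + g x) \<in> lie_gen F"
| scale: "f \<in> lie_gen F \<Longrightarrow> (\<lambda>x. c *\<^sub>R f x) \<in> lie_gen F"
| bracket: "f \<in> lie_gen F \<Longrightarrow> g \<in> lie_gen F \<Longrightarrow> lie_bracket f g \<in> lie_gen F"

end

theory Submission
  imports Defs
begin

(* The Hamiltonian fields satisfy [v(f), v(g)] = v({f, g}) with the Poisson bracket
   {f, g} = f_x1 g_x2 - f_x2 g_x1, so Lie F consists of Hamiltonian fields of polynomials.
   Conversely {x1^a x2^b, x1^c x2^d} = (ad - bc) x1^(a+c-1) x2^(b+d-1). Bracketing x1^2 x2^2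
   with x1 and x2 gives x1^2 x2 and x1 x2^2; bracketing x1^i x2^j with these raises its degree
   in x1, resp. x2, by one with factor 2j - i, resp. j - 2i. Hence every x1^p x2^q of degree at
   least 2 is reached from a monomial of lower degree, since p - 1 = 2q and q - 1 = 2p cannot
   hold together. So every monomial field lies in Lie F, and every polynomial Hamiltonian field
   is a linear combination of those. *)

definition has_partials ::
    "(real \<times> real \<Rightarrow> real) \<Rightarrow> (real \<times> real \<Rightarrow> real) \<Rightarrow> (real \<times> real \<Rightarrow> real) \<Rightarrow> bool" where
  "has_partials f fx fy \<longleftrightarrow> (\<forall>p. (f has_derivative (\<lambda>v. fx p * fst v + fy p * snd v)) (at p))"

lemma has_partialsD:
  "has_partials f fx fy \<Longrightarrow> (f has_derivative (\<lambda>v. fx p * fst v + fy p * snd v)) (at p)"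
  unfolding has_partials_def by blast

lemma has_partials_add:
  "has_partials f fx fy \<Longrightarrow> has_partials g gx gy \<Longrightarrow>
    has_partials (\<lambda>p. f p + g p) (\<lambda>p. fx p + gx p) (\<lambda>p. fy p + gy p)"
  unfolding has_partials_def
  by (auto intro!: has_derivative_eq_rhs[OF has_derivative_add] simp: fun_eq_iff algebra_simps)

lemma has_partials_diff:
  "has_partials f fx fy \<Longrightarrow> has_partials g gx gy \<Longrightarrow>
    has_partials (\<lambda>p. f p - g p) (\<lambda>p. fx p - gx p) (\<lambda>p. fy p - gy p)"
  unfolding has_partials_def
  by (auto intro!: has_derivative_eq_rhs[OF has_derivative_diff] simp: fun_eq_iff algebra_simps)

lemma has_partials_mult:
  "has_partials f fx fy \<Longrightarrow> has_partials g gx gy \<Longrightarrow>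
    has_partials (\<lambda>p. f p * g p) (\<lambda>p. fx p * g p + f p * gx p) (\<lambda>p. fy p * g p + f p * gy p)"
  unfolding has_partials_def
  by (auto intro!: has_derivative_eq_rhs[OF has_derivative_mult] simp: fun_eq_iff algebra_simps)

lemma has_partials_monomial:
  "has_partials (\<lambda>p. a * fst p ^ i * snd p ^ j)
     (\<lambda>p. a * real i * fst p ^ (i - 1) * snd p ^ j) (\<lambda>p. a * real j * fst p ^ i * snd p ^ (j - 1))"
  unfolding has_partials_def
  by (intro allI derivative_eq_intros refl) (auto simp: fun_eq_iff algebra_simps)

lemma ham_eq_partials: "has_partials f fx fy \<Longrightarrow> ham f = (\<lambda>p. (- fy p, fx p))"
  by (simp add: ham_def frechet_derivative_at[OF has_partialsD, symmetric])

lemma frechet_derivative_ham: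
  assumes "has_partials f fx fy" "has_partials fx fxx fxy" "has_partials fy fyx fyy"
  shows "frechet_derivative (ham f) (at p) v =
           (- (fyx p * fst v + fyy p * snd v), fxx p * fst v + fxy p * snd v)"
proof -
  have "(ham f has_derivative
          (\<lambda>v. (- (fyx p * fst v + fyy p * snd v), fxx p * fst v + fxy p * snd v))) (at p)"
    unfolding ham_eq_partials[OF assms(1)]
    by (intro has_derivative_Pair has_derivative_minus has_partialsD assms(2,3))
  then show ?thesis
    by (simp add: frechet_derivative_at[symmetric])
qed

text \<open>The symmetry of the mixed second partials is what cancels the second-order terms.\<close>
lemma lie_bracket_ham:
  assumes f: "has_partials f fx fy" "has_partials fx fxx fxy" "has_partials fy fyx fyy"
      "\<And>p. fxy p = fyx p"
    and g: "has_partials g gx gy" "has_partials gx gxx gxy" "has_partials gy gyx gyy"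
      "\<And>p. gxy p = gyx p"
  shows "lie_bracket (ham f) (ham g) = ham (\<lambda>p. fx p * gy p - fy p * gx p)"
proof -
  have poisson: "has_partials (\<lambda>p. fx p * gy p - fy p * gx p)
     (\<lambda>p. (fxx p * gy p + fx p * gyx p) - (fyx p * gx p + fy p * gxx p))
     (\<lambda>p. (fxy p * gy p + fx p * gyy p) - (fyy p * gx p + fy p * gxy p))"
    by (intro has_partials_diff has_partials_mult f g)
  show ?thesis
    unfolding lie_bracket_def frechet_derivative_ham[OF f(1-3)] frechet_derivative_ham[OF g(1-3)]
    by (simp add: fun_eq_iff ham_eq_partials[OF f(1)] ham_eq_partials[OF g(1)]
        ham_eq_partials[OF poisson] f(4) g(4) algebra_simps)
qed

text \<open>A polynomial is kept as an unnormalised list of terms \<open>(a, i, j)\<close> standing for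
  \<open>a x1^i x2^j\<close>: products then need no collection of like terms, and the mixed partials
  commute syntactically.\<close>

type_synonym mpoly = "(real \<times> nat \<times> nat) list"

definition mpoly_eval :: "mpoly \<Rightarrow> real \<times> real \<Rightarrow> real" where
  "mpoly_eval L p = (\<Sum>(a, i, j)\<leftarrow>L. a * fst p ^ i * snd p ^ j)"

definition mpoly_dx :: "mpoly \<Rightarrow> mpoly" where
  "mpoly_dx L = map (\<lambda>(a, i, j). (a * real i, i - 1, j)) L"

definition mpoly_dy :: "mpoly \<Rightarrow> mpoly" where
  "mpoly_dy L = map (\<lambda>(a, i, j). (a * real j, i, j - 1)) L"

definition mpoly_smult :: "real \<Rightarrow> mpoly \<Rightarrow> mpoly" where
  "mpoly_smult c L = map (\<lambda>(a, i, j). (c * a, i, j)) L"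

definition mpoly_mult :: "mpoly \<Rightarrow> mpoly \<Rightarrow> mpoly" where
  "mpoly_mult A B = [(a * b, i + k, j + l). (a, i, j) \<leftarrow> A, (b, k, l) \<leftarrow> B]"

lemma mpoly_eval_Nil [simp]: "mpoly_eval [] p = 0"
  and mpoly_eval_Cons [simp]:
    "mpoly_eval ((a, i, j) # L) p = a * fst p ^ i * snd p ^ j + mpoly_eval L p"
  and mpoly_eval_append [simp]: "mpoly_eval (A @ B) p = mpoly_eval A p + mpoly_eval B p"
  by (simp_all add: mpoly_eval_def)

lemma mpoly_eval_smult [simp]: "mpoly_eval (mpoly_smult c L) p = c * mpoly_eval L p"
  by (induction L) (auto simp: mpoly_smult_def algebra_simps)

lemma mpoly_eval_mult [simp]: "mpoly_eval (mpoly_mult A B) p = mpoly_eval A p * mpoly_eval B p"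
proof (induction A)
  case (Cons t A)
  have "mpoly_eval (map (\<lambda>(b, k, l). (a * b, i + k, j + l)) B) p =
      a * fst p ^ i * snd p ^ j * mpoly_eval B p" for a i j
    by (induction B) (auto simp: algebra_simps power_add)
  with Cons show ?case
    by (cases t) (simp add: mpoly_mult_def algebra_simps)
qed (simp add: mpoly_mult_def)

lemma mpoly_dx_dy_commute: "mpoly_dx (mpoly_dy L) = mpoly_dy (mpoly_dx L)"
  by (simp add: mpoly_dx_def mpoly_dy_def case_prod_beta)

lemma has_partials_mpoly:
  "has_partials (mpoly_eval L) (mpoly_eval (mpoly_dx L)) (mpoly_eval (mpoly_dy L))"
proof (induction L)
  case Nil
  show ?case
    by (simp add: has_partials_def mpoly_eval_def mpoly_dx_def mpoly_dy_def)
next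
  case (Cons t L)
  obtain a i j where "t = (a, i, j)"
    by (cases t)
  with has_partials_add[OF has_partials_monomial Cons] show ?case
    by (simp add: mpoly_dx_def mpoly_dy_def mpoly_eval_def del: One_nat_def)
qed

lemma ham_mpoly:
  "ham (mpoly_eval L) = (\<lambda>p. (- mpoly_eval (mpoly_dy L) p, mpoly_eval (mpoly_dx L) p))"
  by (rule ham_eq_partials[OF has_partials_mpoly])

definition mpoly_poisson :: "mpoly \<Rightarrow> mpoly \<Rightarrow> mpoly" where
  "mpoly_poisson A B =
     mpoly_mult (mpoly_dx A) (mpoly_dy B) @ mpoly_smult (-1) (mpoly_mult (mpoly_dy A) (mpoly_dx B))"

lemma mpoly_eval_poisson [simp]:
  "mpoly_eval (mpoly_poisson A B) p =
     mpoly_eval (mpoly_dx A) p * mpoly_eval (mpoly_dy B) p -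
     mpoly_eval (mpoly_dy A) p * mpoly_eval (mpoly_dx B) p"
  by (simp add: mpoly_poisson_def)

lemma lie_bracket_ham_mpoly:
  "lie_bracket (ham (mpoly_eval A)) (ham (mpoly_eval B)) = ham (mpoly_eval (mpoly_poisson A B))"
  unfolding mpoly_eval_poisson[abs_def]
  by (rule lie_bracket_ham[OF has_partials_mpoly has_partials_mpoly has_partials_mpoly _
        has_partials_mpoly has_partials_mpoly has_partials_mpoly])
    (simp_all add: mpoly_dx_dy_commute)

lemma mpoly_eval_concat: "mpoly_eval (concat Ls) p = (\<Sum>L\<leftarrow>Ls. mpoly_eval L p)"
  by (induction Ls) auto

lemma mpoly_eval_eq_double_sum:
  assumes "\<forall>(a, i, j) \<in> set L. i \<le> N \<and> j \<le> N"
  shows "mpoly_eval L p =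
    (\<Sum>i\<le>N. \<Sum>j\<le>N. (\<Sum>(a, k, l)\<leftarrow>L. if k = i \<and> l = j then a else 0) * fst p ^ i * snd p ^ j)"
  using assms
proof (induction L)
  case (Cons t L)
  obtain a k l where t: "t = (a, k, l)"
    by (cases t)
  have "(if k = i \<and> l = j then a else 0) * fst p ^ i * snd p ^ j =
      (if l = j then if k = i then a * fst p ^ i * snd p ^ j else 0 else 0)" for i j
    by simp
  then have "(\<Sum>i\<le>N. \<Sum>j\<le>N. (if k = i \<and> l = j then a else 0) * fst p ^ i * snd p ^ j) =
      a * fst p ^ k * snd p ^ l"
    using Cons.prems by (simp add: t)
  with Cons show ?case
    by (simp add: t algebra_simps sum.distrib)
qed simp

lemma poly2_mpoly_eval: "poly2 (mpoly_eval L)"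
proof -
  define N where "N = (\<Sum>(a, i, j)\<leftarrow>L. i + j)"
  have "\<forall>(a, i, j) \<in> set L. i \<le> N \<and> j \<le> N"
    using member_le_sum_list[of _ "map (\<lambda>(a, i, j). i + j) L"] by (force simp: N_def)
  then show ?thesis
    unfolding poly2_def by (force simp: fun_eq_iff mpoly_eval_eq_double_sum)
qed

lemma poly2_iff_mpoly: "poly2 f \<longleftrightarrow> (\<exists>L. f = mpoly_eval L)"
proof
  assume "poly2 f"
  then obtain c N where f: "f = (\<lambda>(x1, x2). \<Sum>i\<le>N. \<Sum>j\<le>N. c i j * x1 ^ i * x2 ^ j)"
    unfolding poly2_def by blast
  have "mpoly_eval [(c i j, i, j). i \<leftarrow> [0..<Suc N], j \<leftarrow> [0..<Suc N]] (x1, x2) = f (x1, x2)"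
    for x1 x2
    unfolding mpoly_eval_concat
    by (simp add: f mpoly_eval_def o_def interv_sum_list_conv_sum_set_nat
        atLeast0LessThan lessThan_Suc_atMost del: upt_Suc)
  then have "f = mpoly_eval [(c i j, i, j). i \<leftarrow> [0..<Suc N], j \<leftarrow> [0..<Suc N]]"
    by auto
  then show "\<exists>L. f = mpoly_eval L" ..
qed (auto simp: poly2_mpoly_eval)

lemma ham_mpoly_Nil: "ham (mpoly_eval []) = (\<lambda>x. 0)"
  by (simp add: ham_mpoly mpoly_dx_def mpoly_dy_def zero_prod_def)

lemma ham_mpoly_append:
  "ham (mpoly_eval (A @ B)) = (\<lambda>x. ham (mpoly_eval A) x + ham (mpoly_eval B) x)"
  by (simp add: ham_mpoly mpoly_dx_def mpoly_dy_def)

lemma mpoly_dx_smult: "mpoly_dx (mpoly_smult c A) = mpoly_smult c (mpoly_dx A)"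
  and mpoly_dy_smult: "mpoly_dy (mpoly_smult c A) = mpoly_smult c (mpoly_dy A)"
  by (simp_all add: mpoly_dx_def mpoly_dy_def mpoly_smult_def case_prod_beta mult.assoc)

lemma ham_mpoly_smult:
  "ham (mpoly_eval (mpoly_smult c A)) = (\<lambda>x. c *\<^sub>R ham (mpoly_eval A) x)"
  by (simp add: ham_mpoly mpoly_dx_smult mpoly_dy_smult)

lemma lie_gen_subset_poly_fields:
  assumes "F \<subseteq> {ham f | f. poly2 f}"
  shows "lie_gen F \<subseteq> {ham f | f. poly2 f}"
proof
  fix v
  assume "v \<in> lie_gen F"
  then have "\<exists>L. v = ham (mpoly_eval L)"
  proof (induction rule: lie_gen.induct)
    case (base f)
    with assms show ?case
      by (auto simp: poly2_iff_mpoly)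
  next
    case zero
    show ?case
      using ham_mpoly_Nil by metis
  next
    case (add f g)
    then show ?case
      using ham_mpoly_append by metis
  next
    case (scale f c)
    then show ?case
      using ham_mpoly_smult by metis
  next
    case (bracket f g)
    then show ?case
      using lie_bracket_ham_mpoly by metis
  qed
  then show "v \<in> {ham f | f. poly2 f}"
    by (auto simp: poly2_iff_mpoly)
qed

definition monomial_field :: "nat \<Rightarrow> nat \<Rightarrow> vf" where
  "monomial_field i j = ham (\<lambda>p. fst p ^ i * snd p ^ j)"

lemma monomial_field_mpoly: "monomial_field i j = ham (mpoly_eval [(1, i, j)])"
  unfolding monomial_field_def by (rule arg_cong[where f = ham]) (simp add: fun_eq_iff)

lemma poly_fields_subset_lie_gen:
  assumes "\<And>i j. monomial_field i j \<in> lie_gen F"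
  shows "{ham f | f. poly2 f} \<subseteq> lie_gen F"
proof -
  have "ham (mpoly_eval L) \<in> lie_gen F" for L
  proof (induction L)
    case Nil
    show ?case
      unfolding ham_mpoly_Nil by (rule lie_gen.zero)
  next
    case (Cons t L)
    obtain a i j where t: "t = (a, i, j)"
      by (cases t)
    have "t # L = mpoly_smult a [(1, i, j)] @ L"
      by (simp add: t mpoly_smult_def)
    then have "ham (mpoly_eval (t # L)) =
        (\<lambda>x. a *\<^sub>R monomial_field i j x + ham (mpoly_eval L) x)"
      by (simp only: ham_mpoly_append ham_mpoly_smult monomial_field_mpoly)
    with Cons show ?case
      by (simp add: lie_gen.add lie_gen.scale assms)
  qed
  then show ?thesis
    by (auto simp: poly2_iff_mpoly)
qed

lemma lie_bracket_monomial_field: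
  "lie_bracket (monomial_field a b) (monomial_field c d) =
     (\<lambda>x. (real (a * d) - real (b * c)) *\<^sub>R monomial_field (a + c - 1) (b + d - 1) x)"
proof -
  \<comment> \<open>The truncated \<open>n - 1\<close> is harmless: the factor \<open>real n\<close> vanishes for \<open>n = 0\<close>.\<close>
  have product: "real n * x ^ (n - 1) * y ^ m * (real k * x ^ j * y ^ (k - 1)) =
      real (n * k) * (x ^ (n + j - 1) * y ^ (m + k - 1))" for n m j k and x y :: real
    by (cases n; cases k) (simp_all add: power_add algebra_simps)
  have "mpoly_eval (mpoly_poisson [(1, a, b)] [(1, c, d)]) =
      mpoly_eval (mpoly_smult (real (a * d) - real (b * c)) [(1, a + c - 1, b + d - 1)])"
  proof
    fix p
    have "mpoly_eval (mpoly_poisson [(1, a, b)] [(1, c, d)]) p =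
        real a * fst p ^ (a - 1) * snd p ^ b * (real d * fst p ^ c * snd p ^ (d - 1)) -
        real c * fst p ^ (c - 1) * snd p ^ d * (real b * fst p ^ a * snd p ^ (b - 1))"
      by (simp add: mpoly_dx_def mpoly_dy_def)
    also have "\<dots> = (real (a * d) - real (b * c)) * (fst p ^ (a + c - 1) * snd p ^ (b + d - 1))"
      unfolding product by (simp add: add.commute mult.commute left_diff_distrib)
    finally show "mpoly_eval (mpoly_poisson [(1, a, b)] [(1, c, d)]) p =
        mpoly_eval (mpoly_smult (real (a * d) - real (b * c)) [(1, a + c - 1, b + d - 1)]) p"
      by simp
  qed
  then show ?thesis
    unfolding monomial_field_mpoly lie_bracket_ham_mpoly by (simp only: ham_mpoly_smult)
qed

lemma lie_gen_scaled_bracket: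
  assumes "f \<in> lie_gen F" "g \<in> lie_gen F" "lie_bracket f g = (\<lambda>x. c *\<^sub>R h x)" "c \<noteq> 0"
  shows "h \<in> lie_gen F"
proof -
  have "(\<lambda>x. c *\<^sub>R h x) \<in> lie_gen F"
    using lie_gen.bracket[OF assms(1,2)] assms(3) by simp
  from lie_gen.scale[OF this, of "1 / c"] assms(4) show ?thesis
    by simp
qed

lemma monomial_field_in_lie_gen:
  assumes x: "monomial_field 1 0 \<in> lie_gen F" and y: "monomial_field 0 1 \<in> lie_gen F"
    and x2y2: "monomial_field 2 2 \<in> lie_gen F"
  shows "monomial_field p q \<in> lie_gen F"
proof -
  have x2y: "monomial_field 2 1 \<in> lie_gen F"
    by (rule lie_gen_scaled_bracket[OF x x2y2, of 2])
      (simp_all add: lie_bracket_monomial_field numeral_2_eq_2)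
  have xy2: "monomial_field 1 2 \<in> lie_gen F"
    by (rule lie_gen_scaled_bracket[OF y x2y2, of "-2"])
      (simp_all add: lie_bracket_monomial_field numeral_2_eq_2)
  have raise_x: "monomial_field (i + 1) j \<in> lie_gen F"
    if "monomial_field i j \<in> lie_gen F" "i \<noteq> 2 * j" for i j
    by (rule lie_gen_scaled_bracket[OF x2y that(1), of "real (2 * j) - real i"])
      (use that(2) in \<open>simp_all add: lie_bracket_monomial_field numeral_2_eq_2\<close>)
  have raise_y: "monomial_field i (j + 1) \<in> lie_gen F"
    if "monomial_field i j \<in> lie_gen F" "j \<noteq> 2 * i" for i j
    by (rule lie_gen_scaled_bracket[OF xy2 that(1), of "real j - real (2 * i)"])
      (use that(2) in \<open>simp_all add: lie_bracket_monomial_field numeral_2_eq_2\<close>)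
  have zero: "monomial_field 0 0 = (\<lambda>x. 0)"
    by (simp add: monomial_field_mpoly ham_mpoly mpoly_dx_def mpoly_dy_def zero_prod_def)
  show ?thesis
  proof (induction "p + q" arbitrary: p q rule: less_induct)
    case less
    \<comment> \<open>Both ways of lowering the degree are blocked only if \<open>p = 2q + 1\<close> and \<open>q = 2p + 1\<close>.\<close>
    consider "p = 0" "q = 0" | "p = 1" "q = 0" | "p = 0" "q = 1"
      | "p \<ge> 1" "p - 1 \<noteq> 2 * q" | "q \<ge> 1" "q - 1 \<noteq> 2 * p"
      by linarith
    then show ?case
    proof cases
      case 1
      with zero show ?thesis
        by (simp add: lie_gen.zero)
    next
      case 2
      with x show ?thesis
        by simp
    next
      case 3
      with y show ?thesis
        by simp
    next
      case 4
      with raise_x[of "p - 1" q] less.hyps[of "p - 1" q] show ?thesis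
        by simp
    next
      case 5
      with raise_y[of p "q - 1"] less.hyps[of p "q - 1"] show ?thesis
        by simp
    qed
  qed
qed

theorem lemma3p12:
  shows "lie_gen {ham (\<lambda>x. fst x), ham (\<lambda>x. snd x), ham (\<lambda>x. (fst x)^2 * (snd x)^2)}
           = {ham f | f. poly2 f}"
proof -
  let ?G = "{monomial_field 1 0, monomial_field 0 1, monomial_field 2 2}"
  have generators: "{ham (\<lambda>x. fst x), ham (\<lambda>x. snd x), ham (\<lambda>x. (fst x)^2 * (snd x)^2)} = ?G"
    by (simp add: monomial_field_def)
  have "monomial_field i j \<in> {ham f | f. poly2 f}" for i j
    using poly2_mpoly_eval monomial_field_mpoly by blast
  then have "lie_gen ?G \<subseteq> {ham f | f. poly2 f}"
    by (intro lie_gen_subset_poly_fields) blast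
  moreover have "monomial_field i j \<in> lie_gen ?G" for i j
    by (rule monomial_field_in_lie_gen) (simp_all add: lie_gen.base)
  then have "{ham f | f. poly2 f} \<subseteq> lie_gen ?G"
    by (rule poly_fields_subset_lie_gen)
  ultimately show ?thesis
    unfolding generators by (rule equalityI)
qed

end
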